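(* There is a family of finite labeled prime event structures $(\mathcal{E}_n)_{n\ge1}$ with event sets $E_n$ such that $|E_n|=n+1$, $|\mathcal{L}(\mathcal{E}_n)|=n!$, and the automaton encoding $\mathcal{A}^{\mathcal{E}_n}$ has exactly $|Q^{\mathcal{E}_n}|=2^n+1$ states. Moreover, every nondeterministic finite automaton $\mathcal{A}$ with $\mathcal{L}(\mathcal{A})=\mathcal{L}(\mathcal{E}_n)$ has at least $2^n$ states.
   Context: A finite $\mathcal{X}$-labeled prime event structure is $\mathcal{E}=\langle E,<,\#,h\rangle$ with finite $E$, strict partial order $<$, labeling $h:E\to\mathcal{X}$, and a symmetric irreflexive conflict relation $\#$ closed under $<$ (if $e\#e'$ and $e'<e''$ then $e\#e''$); $\mathcal{X}$ contains $\varepsilon$ denoting the empty word; there is an event $\bot$ with nothing below it, $\bot<e$ for all other $e$, $h(\bot)=\varepsilon$. A configuration is a left-closed, conflict-free subset of $E$; maximal if no configuration strictly contains it. A trace of a configuration $C$ lists every event of $C$ exactly once respecting $<$; $\mathcal{L}(\mathcal{E})$ is the set of words $h(t)$ (pointwise labels, $\varepsilon$ omitted) for traces $t$ of maximal configurations. The automaton encoding of $\mathcal{E}$ is the NFA $\mathcal{A}^{\mathcal{E}}=\langle Q^{\mathcal{E}},\mathcal{X},\delta^{\mathcal{E}},q_0,F\rangle$ with $Q^{\mathcal{E}}=\{q_C\mid C$ a configuration of $\mathcal{E}\}$, $(q_{C_1},\sigma,q_{C_2})\in\delta^{\mathcal{E}}$ iff there is $e\in E$ with $C_1\cup\{e\}=C_2$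 and $h(e)=\sigma$ (transitions labeled $\varepsilon$ are $\varepsilon$-moves), initial state $q_{\{\bot\}}$, and accepting states $F=\{q_C\mid C$ maximal$\}$. *)

theory Defs
  imports Main
begin

text \<open>Labels: a label of type 'x option; None plays the role of the empty word epsilon.\<close>

record ('e, 'x) pes =
  ev   :: "'e set"
  lt   :: "('e \<times> 'e) set"
  cfl  :: "('e \<times> 'e) set"
  lab  :: "'e \<Rightarrow> 'x option"
  bot  :: "'e"

definition wf_pes :: "('e, 'x) pes \<Rightarrow> bool" where
  "wf_pes P \<longleftrightarrow>
     finite (ev P) \<and>
     lt P \<subseteq> ev P \<times> ev P \<and> irrefl (lt P) \<and> trans (lt P) \<and>
     cfl P \<subseteq> ev P \<times> ev P \<and> sym (cfl P) \<and> irrefl (cfl P) \<and>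
     (\<forall>e e' e''. (e, e') \<in> cfl P \<and> (e', e'') \<in> lt P \<longrightarrow> (e, e'') \<in> cfl P) \<and>
     bot P \<in> ev P \<and> (\<forall>e. (e, bot P) \<notin> lt P) \<and>
     (\<forall>e \<in> ev P. e \<noteq> bot P \<longrightarrow> (bot P, e) \<in> lt P) \<and>
     lab P (bot P) = None"

definition is_config :: "('e, 'x) pes \<Rightarrow> 'e set \<Rightarrow> bool" where
  "is_config P C \<longleftrightarrow> C \<subseteq> ev P \<and>
     (\<forall>e \<in> C. \<forall>e'. (e', e) \<in> lt P \<longrightarrow> e' \<in> C) \<and>
     (\<forall>e \<in> C. \<forall>e' \<in> C. (e, e') \<notin> cfl P)"

definition is_max_config :: "('e, 'x) pes \<Rightarrow> 'e set \<Rightarrow> bool" where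
  "is_max_config P C \<longleftrightarrow> is_config P C \<and> \<not> (\<exists>C'. is_config P C' \<and> C \<subset> C')"

definition is_trace :: "('e, 'x) pes \<Rightarrow> 'e set \<Rightarrow> 'e list \<Rightarrow> bool" where
  "is_trace P C t \<longleftrightarrow> distinct t \<and> set t = C \<and>
     (\<forall>i j. i < j \<and> j < length t \<longrightarrow> (t ! j, t ! i) \<notin> lt P)"

definition pes_lang :: "('e, 'x) pes \<Rightarrow> 'x list set" where
  "pes_lang P = {List.map_filter (lab P) t | t C. is_max_config P C \<and> is_trace P C t}"

record ('q, 'x) nfa =
  states :: "'q set"
  trans  :: "('q \<times> 'x option \<times> 'q) set"
  init   :: "'q"
  final  :: "'q set"

definition wf_nfa :: "('q, 'x) nfa \<Rightarrow> bool" where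
  "wf_nfa A \<longleftrightarrow> finite (states A) \<and> init A \<in> states A \<and> final A \<subseteq> states A \<and>
     trans A \<subseteq> states A \<times> UNIV \<times> states A"

inductive steps :: "('q, 'x) nfa \<Rightarrow> 'q \<Rightarrow> 'x list \<Rightarrow> 'q \<Rightarrow> bool" for A where
  refl: "steps A q [] q"
| eps:  "(q, None, q') \<in> trans A \<Longrightarrow> steps A q' w r \<Longrightarrow> steps A q w r"
| sym:  "(q, Some a, q') \<in> trans A \<Longrightarrow> steps A q' w r \<Longrightarrow> steps A q (a # w) r"

definition nfa_lang :: "('q, 'x) nfa \<Rightarrow> 'x list set" where
  "nfa_lang A = {w. \<exists>f \<in> final A. steps A (init A) w f}"

definition encoding :: "('e, 'x) pes \<Rightarrow> ('e set, 'x) nfa" where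
  "encoding P = \<lparr> states = {C. is_config P C},
     trans = {(C1, \<sigma>, C2). is_config P C1 \<and> is_config P C2 \<and>
                (\<exists>e \<in> ev P. C1 \<union> {e} = C2 \<and> lab P e = \<sigma>)},
     init = {bot P},
     final = {C. is_max_config P C} \<rparr>"

end

theory Submission
  imports Defs "HOL-Combinatorics.Multiset_Permutations"
begin

text \<open>Take \<open>\<bottom>\<close> = 0 below \<open>n\<close> pairwise concurrent events labelled \<open>1, \<dots>, n\<close>. The
configurations are \<open>{}\<close> and the sets \<open>{0} \<union> S\<close> with \<open>S \<subseteq> {1..n}\<close>, giving \<open>2^n + 1\<close> states,
and the only maximal configuration is everything, whose traces spell exactly the permutations of
\<open>{1..n}\<close>. For the lower bound, the words \<open>x\<^sub>S y\<^sub>S\<close>, where \<open>x\<^sub>S\<close> lists \<open>S\<close> and \<open>y\<^sub>S\<close> lists its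
complement, form a fooling set: a state reached after both \<open>x\<^sub>S\<close> and \<open>x\<^sub>T\<close> on accepting runs
of \<open>x\<^sub>S y\<^sub>S\<close> and \<open>x\<^sub>T y\<^sub>T\<close> would make \<open>x\<^sub>S y\<^sub>T\<close> a permutation, forcing \<open>S = T\<close>.\<close>

lemma steps_append: "steps A q u m \<Longrightarrow> steps A m v r \<Longrightarrow> steps A q (u @ v) r"
  by (induction rule: steps.induct) (auto intro: steps.intros)

lemma steps_appendE:
  assumes "steps A q (u @ v) r"
  obtains m where "steps A q u m" and "steps A m v r"
proof -
  have "\<exists>m. steps A q u m \<and> steps A m v r" if "steps A q w r" "w = u @ v" for w
    using that
  proof (induction arbitrary: u rule: steps.induct)
    case (refl q)
    then show ?case by (auto intro: steps.refl)
  next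
    case (eps q q' w r)
    then show ?case by (metis steps.eps)
  next
    case (sym q a q' w r)
    show ?case
    proof (cases u)
      case Nil
      then show ?thesis using sym by (auto intro: steps.intros)
    next
      case (Cons b u')
      with sym show ?thesis by (auto intro: steps.sym)
    qed
  qed
  with assms that show thesis by blast
qed

lemma steps_in_states:
  "steps A q w r \<Longrightarrow> wf_nfa A \<Longrightarrow> q \<in> states A \<Longrightarrow> r \<in> states A"
  by (induction rule: steps.induct) (auto simp: wf_nfa_def)

lemma card_fooling_set_le_card_states:
  assumes wf: "wf_nfa A"
    and accepted: "\<And>i. i \<in> I \<Longrightarrow> x i @ y i \<in> nfa_lang A"
    and fooling: "\<And>i j. i \<in> I \<Longrightarrow> j \<in> I \<Longrightarrow>
                    x i @ y j \<in> nfa_lang A \<Longrightarrow> x j @ y i \<in> nfa_lang A \<Longrightarrow> i = j"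
  shows "card I \<le> card (states A)"
proof -
  have "\<forall>i \<in> I. \<exists>m. steps A (init A) (x i) m \<and> (\<exists>f \<in> final A. steps A m (y i) f)"
    using accepted unfolding nfa_lang_def by (blast elim: steps_appendE)
  then obtain q where q: "\<And>i. i \<in> I \<Longrightarrow> steps A (init A) (x i) (q i)"
    and q_final: "\<And>i. i \<in> I \<Longrightarrow> \<exists>f \<in> final A. steps A (q i) (y i) f"
    by metis
  have cross: "x i @ y j \<in> nfa_lang A" if "i \<in> I" "j \<in> I" "q i = q j" for i j
    using q[OF \<open>i \<in> I\<close>] q_final[OF \<open>j \<in> I\<close>] \<open>q i = q j\<close>
    unfolding nfa_lang_def by (auto intro: steps_append)
  have "inj_on q I"
    by (rule inj_onI) (metis cross fooling)
  moreover have "q ` I \<subseteq> states A"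
    using q steps_in_states[OF _ wf] wf by (auto simp: wf_nfa_def)
  ultimately show ?thesis
    using wf by (simp add: wf_nfa_def card_inj_on_le)
qed

lemma sorted_split_in_permutations_of_set_iff:
  assumes "finite U" "S \<subseteq> U" "T \<subseteq> U"
  shows "sorted_list_of_set S @ sorted_list_of_set (U - T) \<in> permutations_of_set U \<longleftrightarrow> S = T"
proof -
  have "finite S" "finite T"
    using assms finite_subset by auto
  then show ?thesis
    using assms by (auto simp: permutations_of_set_def)
qed

lemma card_states_ge_if_lang_permutations:
  fixes U :: "'x::linorder set"
  assumes "wf_nfa A" "nfa_lang A = permutations_of_set U" "finite U"
  shows "2 ^ card U \<le> card (states A)"
proof -
  have "card (Pow U) \<le> card (states A)"
    using assms sorted_split_in_permutations_of_set_iff[OF \<open>finite U\<close>]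
    by (intro card_fooling_set_le_card_states[where x = sorted_list_of_set
          and y = "\<lambda>S. sorted_list_of_set (U - S)"]) auto
  with \<open>finite U\<close> show ?thesis
    by (simp add: card_Pow)
qed

lemma max_config_iff_if_conflict_free:
  assumes "wf_pes P" "cfl P = {}"
  shows "is_max_config P C \<longleftrightarrow> C = ev P"
proof -
  have "is_config P (ev P)"
    using assms by (auto simp: wf_pes_def is_config_def)
  moreover have "C \<subseteq> ev P" if "is_config P C" for C
    using that by (simp add: is_config_def)
  ultimately show ?thesis
    unfolding is_max_config_def by blast
qed

lemma pes_lang_if_conflict_free:
  assumes "wf_pes P" "cfl P = {}"
  shows "pes_lang P = {List.map_filter (lab P) t | t. is_trace P (ev P) t}"
  using max_config_iff_if_conflict_free[OF assms] by (auto simp: pes_lang_def)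

lemma trace_starts_with_bot:
  assumes wf: "wf_pes P" and trace: "is_trace P C t" and "C \<subseteq> ev P" "bot P \<in> C"
  shows "t = bot P # tl t"
proof -
  obtain j where j: "j < length t" "t ! j = bot P"
    using trace \<open>bot P \<in> C\<close> by (metis in_set_conv_nth is_trace_def)
  have "j = 0"
  proof (rule ccontr)
    assume "j \<noteq> 0"
    have "t ! 0 \<noteq> t ! j"
      using trace j(1) \<open>j \<noteq> 0\<close> unfolding is_trace_def distinct_conv_nth
      by (metis gr_zeroI order.strict_trans)
    moreover have "t ! 0 \<in> ev P"
      using j(1) trace \<open>C \<subseteq> ev P\<close> by (auto simp: is_trace_def intro!: nth_mem)
    ultimately have "(t ! j, t ! 0) \<in> lt P"
      using wf j by (simp add: wf_pes_def)
    with trace j(1) \<open>j \<noteq> 0\<close> show False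
      unfolding is_trace_def by (metis gr_zeroI)
  qed
  with j show ?thesis
    by (cases t) auto
qed

definition concurrent_pes :: "nat \<Rightarrow> (nat, nat) pes" where
  "concurrent_pes n = \<lparr> ev = {0..n}, lt = {0} \<times> {1..n}, cfl = {},
     lab = (\<lambda>i. if i = 0 then None else Some i), bot = 0 \<rparr>"

lemma wf_concurrent_pes: "wf_pes (concurrent_pes n)"
  by (auto simp: wf_pes_def concurrent_pes_def irrefl_def Relation.trans_def)

lemma is_config_concurrent_pes_iff:
  "is_config (concurrent_pes n) C \<longleftrightarrow> C \<subseteq> {0..n} \<and> (C \<noteq> {} \<longrightarrow> 0 \<in> C)"
  unfolding is_config_def concurrent_pes_def
  by (auto simp: subset_iff) (metis Suc_leI neq0_conv)

lemma configs_concurrent_pes: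
  "{C. is_config (concurrent_pes n) C} = insert {} (insert 0 ` Pow {1..n})"
proof (intro set_eqI iffI)
  fix C
  assume "C \<in> {C. is_config (concurrent_pes n) C}"
  then have "C \<subseteq> {0..n}" "C \<noteq> {} \<Longrightarrow> 0 \<in> C"
    by (simp_all add: is_config_concurrent_pes_iff)
  then have "C = {} \<or> C = insert 0 (C - {0}) \<and> C - {0} \<in> Pow {1..n}"
    by auto
  then show "C \<in> insert {} (insert 0 ` Pow {1..n})"
    by blast
qed (auto simp: is_config_concurrent_pes_iff)

lemma card_configs_concurrent_pes:
  "card {C. is_config (concurrent_pes n) C} = 2 ^ n + 1"
proof -
  have "inj_on (insert 0) (Pow {1..n})"
    by (rule inj_onI) (metis PowD atLeastAtMost_iff insert_ident not_one_le_zero subsetD)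
  then have "card (insert 0 ` Pow {1..n}) = 2 ^ n"
    by (simp add: card_image card_Pow)
  then show ?thesis
    unfolding configs_concurrent_pes by (subst card_insert_disjoint) auto
qed

lemma is_trace_concurrent_pes_iff:
  "is_trace (concurrent_pes n) {0..n} t \<longleftrightarrow> (\<exists>w \<in> permutations_of_set {1..n}. t = 0 # w)"
proof
  assume trace: "is_trace (concurrent_pes n) {0..n} t"
  then have t: "t = 0 # tl t"
    using trace_starts_with_bot[OF wf_concurrent_pes trace] by (simp add: concurrent_pes_def)
  with trace have "distinct (0 # tl t)" "set (0 # tl t) = {0..n}"
    by (metis is_trace_def)+
  then have "tl t \<in> permutations_of_set ({0..n} - {0})"
    by (auto simp: permutations_of_set_def)
  moreover have "{0..n} - {0} = {1..n}"
    by auto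
  ultimately have "tl t \<in> permutations_of_set {1..n}"
    by simp
  with t show "\<exists>w \<in> permutations_of_set {1..n}. t = 0 # w"
    by blast
next
  assume "\<exists>w \<in> permutations_of_set {1..n}. t = 0 # w"
  then obtain w where "distinct w" "set w = {1..n}" "t = 0 # w"
    by (auto simp: permutations_of_set_def)
  moreover have "w ! k \<noteq> 0" if "k < length w" for k
    using nth_mem[OF that] \<open>set w = {1..n}\<close> by auto
  ultimately show "is_trace (concurrent_pes n) {0..n} t"
    by (auto simp: is_trace_def concurrent_pes_def nth_Cons split: nat.splits)
qed

lemma map_filter_lab_concurrent_pes:
  "0 \<notin> set w \<Longrightarrow> List.map_filter (lab (concurrent_pes n)) (0 # w) = w"
  by (induction w) (auto simp: concurrent_pes_def)

lemma pes_lang_concurrent_pes: "pes_lang (concurrent_pes n) = permutations_of_set {1..n}"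
proof -
  have "ev (concurrent_pes n) = {0..n}" "cfl (concurrent_pes n) = {}"
    by (simp_all add: concurrent_pes_def)
  then have "pes_lang (concurrent_pes n) =
      {List.map_filter (lab (concurrent_pes n)) t | t. \<exists>w \<in> permutations_of_set {1..n}. t = 0 # w}"
    by (simp add: pes_lang_if_conflict_free[OF wf_concurrent_pes] is_trace_concurrent_pes_iff)
  also have "\<dots> = (\<lambda>w. List.map_filter (lab (concurrent_pes n)) (0 # w)) ` permutations_of_set {1..n}"
    by blast
  also have "\<dots> = id ` permutations_of_set {1..n}"
  proof (rule image_cong[OF HOL.refl])
    fix w
    assume "w \<in> permutations_of_set {1..n}"
    then have "0 \<notin> set w"
      by (auto simp: permutations_of_set_def)
    then show "List.map_filter (lab (concurrent_pes n)) (0 # w) = id w"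
      unfolding id_def by (rule map_filter_lab_concurrent_pes)
  qed
  finally show ?thesis
    by simp
qed

theorem theorem5:
  "\<exists>ES :: nat \<Rightarrow> (nat, nat) pes. \<forall>n \<ge> 1.
     wf_pes (ES n) \<and>
     card (ev (ES n)) = n + 1 \<and>
     card (pes_lang (ES n)) = fact n \<and>
     card (states (encoding (ES n))) = 2 ^ n + 1 \<and>
     (\<forall>A :: (nat, nat) nfa. wf_nfa A \<and> nfa_lang A = pes_lang (ES n) \<longrightarrow>
        card (states A) \<ge> 2 ^ n)"
proof (intro exI[of _ concurrent_pes] allI impI conjI)
  fix n :: nat and A :: "(nat, nat) nfa"
  show "wf_pes (concurrent_pes n)"
    by (rule wf_concurrent_pes)
  show "card (ev (concurrent_pes n)) = n + 1"
    by (simp add: concurrent_pes_def)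
  show "card (pes_lang (concurrent_pes n)) = fact n"
    by (simp add: pes_lang_concurrent_pes)
  show "card (states (encoding (concurrent_pes n))) = 2 ^ n + 1"
    by (simp add: encoding_def card_configs_concurrent_pes)
  assume "wf_nfa A \<and> nfa_lang A = pes_lang (concurrent_pes n)"
  then show "card (states A) \<ge> 2 ^ n"
    using card_states_ge_if_lang_permutations[of A "{1..n}"]
    by (simp add: pes_lang_concurrent_pes)
qed

end
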